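(* Let $G=G_{1}\times\cdots\times G_{d}$ be a direct product where each $G_j$ is $k_j$-regular with $k_j\geq 1$. If, for each $j$, the adjacency eigenvalues of $G_j$ are integers all having the same 2-adic valuation $\nu_2$, then for every vertex $u$ of $G$, $\uparrow^{2}G$ has Laplacian perfect state transfer between $(0,u)$ and $(1,u)$.
   Context: All graphs are simple, undirected and unweighted. The direct product $G\times H$ is the graph with adjacency matrix $A(G)\otimes A(H)$. For a nonzero integer $n$, $\nu_2(n)$ is the exponent of the largest power of $2$ dividing $n$, and $\nu_2(0)=\infty$. The blow-up $\uparrow^{2}G$ has vertex set $\mathbb{Z}_2\times V(G)$, with $(l,u)\sim(m,v)$ iff $u\sim v$ in $G$. For a graph $X$ with Laplacian $L=D-A$, $U(t)=\exp(itL)$, and $X$ has Laplacian perfect state transfer between vertices $a,b$ if $U(\tau)\mathbf{e}_a=\gamma\mathbf{e}_b$ for some $\tau>0$ and $\gamma\in\mathbb{C}$. *)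

theory Defs
  imports Complex_Main "HOL-Computational_Algebra.Primes" "HOL-Library.Extended_Nat"
begin

type_synonym 'a graph = "'a set \<times> ('a \<Rightarrow> 'a \<Rightarrow> bool)"

definition simple_graph :: "'a graph \<Rightarrow> bool" where
  "simple_graph G \<longleftrightarrow> finite (fst G) \<and>
     (\<forall>u v. snd G u v \<longrightarrow> u \<in> fst G \<and> v \<in> fst G) \<and>
     (\<forall>u v. snd G u v \<longrightarrow> snd G v u) \<and> (\<forall>u. \<not> snd G u u)"

definition degree :: "'a graph \<Rightarrow> 'a \<Rightarrow> nat" where
  "degree G u = card {v \<in> fst G. snd G u v}"

definition regular :: "'a graph \<Rightarrow> nat \<Rightarrow> bool" where
  "regular G k \<longleftrightarrow> (\<forall>u \<in> fst G. degree G u = k)"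

definition adj :: "'a graph \<Rightarrow> 'a \<Rightarrow> 'a \<Rightarrow> real" where
  "adj G u v = (if snd G u v then 1 else 0)"

definition adj_eigenvalue :: "'a graph \<Rightarrow> real \<Rightarrow> bool" where
  "adj_eigenvalue G lam \<longleftrightarrow> (\<exists>f :: 'a \<Rightarrow> real. (\<exists>v \<in> fst G. f v \<noteq> 0) \<and>
      (\<forall>u \<in> fst G. (\<Sum>v \<in> fst G. adj G u v * f v) = lam * f u))"

definition nu2 :: "int \<Rightarrow> enat" where
  "nu2 n = (if n = 0 then \<infinity> else enat (multiplicity (2::int) n))"

text \<open>Direct product of a list of graphs G_1 x ... x G_d (adjacency matrix = Kronecker product).\<close>
definition dprod :: "'a graph list \<Rightarrow> 'a list graph" where
  "dprod Gs = ({xs. length xs = length Gs \<and> (\<forall>j < length Gs. xs ! j \<in> fst (Gs ! j))},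
     (\<lambda>xs ys. length xs = length Gs \<and> length ys = length Gs \<and>
        (\<forall>j < length Gs. snd (Gs ! j) (xs ! j) (ys ! j))))"

definition blowup2 :: "'a graph \<Rightarrow> (nat \<times> 'a) graph" where
  "blowup2 G = ({0,1} \<times> fst G,
     (\<lambda>(l,u) (m,v). l \<in> {0,1} \<and> m \<in> {0,1} \<and> snd G u v))"

definition laplacian :: "'a graph \<Rightarrow> 'a \<Rightarrow> 'a \<Rightarrow> complex" where
  "laplacian G u v = (if u = v then of_nat (degree G u) else 0) - (if snd G u v then 1 else 0)"

fun mat_pow :: "'a set \<Rightarrow> ('a \<Rightarrow> 'a \<Rightarrow> complex) \<Rightarrow> nat \<Rightarrow> 'a \<Rightarrow> 'a \<Rightarrow> complex" where
  "mat_pow V M 0 u v = (if u = v then 1 else 0)"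
| "mat_pow V M (Suc n) u v = (\<Sum>w \<in> V. M u w * mat_pow V M n w v)"

definition lap_U :: "'a graph \<Rightarrow> real \<Rightarrow> 'a \<Rightarrow> 'a \<Rightarrow> complex" where
  "lap_U G t u v = (\<Sum>n. (\<i> * of_real t) ^ n / of_nat (fact n) * mat_pow (fst G) (laplacian G) n u v)"

definition lap_pst :: "'a graph \<Rightarrow> 'a \<Rightarrow> 'a \<Rightarrow> bool" where
  "lap_pst G a b \<longleftrightarrow> a \<in> fst G \<and> b \<in> fst G \<and>
     (\<exists>\<tau> > 0. \<exists>\<gamma> :: complex. \<forall>v \<in> fst G. lap_U G \<tau> v a = \<gamma> * (if v = b then 1 else 0))"

end

(*
  Write A = A(G) for the direct product G of the factors G_j. The indicator of a vertex u of G is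
  the Kronecker product of indicators of vertices of the G_j, and each of these is a sum of
  eigenvectors of the real symmetric matrix A(G_j). Hence the indicator of u is a sum of eigenvectors
  of A with eigenvalues that are products of eigenvalues of the factors. All eigenvalues of G_j are
  2^(c_j) times an odd integer (c_j is finite because the degree k_j >= 1 is an eigenvalue), so these
  products are 2^C times an odd integer, where C is the sum of the c_j.

  G is regular of some degree K, so the Laplacian of the blow-up is L = 2K - J (x) A. An eigenvector
  g of A with eigenvalue mu splits as (g, 0) = (g, g)/2 + (g, -g)/2 into eigenvectors of L with
  eigenvalues 2K - 2 mu and 2K. For tau = pi / 2^(C+1) the two phases differ by
  exp(i tau 2 mu) = exp(i pi * odd) = -1, so U(tau) maps (g, 0) to -exp(2iK tau) (0, g). Summing
  over the eigen-components of the indicator of u gives U(tau) e_(0,u) = -exp(2iK tau) e_(1,u).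
*)
theory Submission
  imports Defs "HOL-Computational_Algebra.Fundamental_Theorem_Algebra" "HOL-Library.Function_Algebras"
begin

definition mat_apply :: "'v set \<Rightarrow> ('v \<Rightarrow> 'v \<Rightarrow> complex) \<Rightarrow> ('v \<Rightarrow> complex) \<Rightarrow> 'v \<Rightarrow> complex" where
  "mat_apply V M f = (\<lambda>x. \<Sum>y\<in>V. M x y * f y)"

lemma mat_apply_zero [simp]: "mat_apply V M (\<lambda>x. 0) = (\<lambda>x. 0)"
  by (simp add: mat_apply_def)

lemma mat_apply_add: "mat_apply V M (\<lambda>x. f x + g x) = (\<lambda>x. mat_apply V M f x + mat_apply V M g x)"
  by (simp add: mat_apply_def algebra_simps sum.distrib)

lemma mat_apply_diff: "mat_apply V M (\<lambda>x. f x - g x) = (\<lambda>x. mat_apply V M f x - mat_apply V M g x)"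
  by (simp add: mat_apply_def algebra_simps sum_subtractf)

lemma mat_apply_scale: "mat_apply V M (\<lambda>x. c * f x) = (\<lambda>x. c * mat_apply V M f x)"
  by (simp add: mat_apply_def sum_distrib_left algebra_simps)

lemma mat_apply_cong: "(\<And>y. y \<in> V \<Longrightarrow> f y = g y) \<Longrightarrow> mat_apply V M f = mat_apply V M g"
  by (simp add: mat_apply_def)

definition in_eigenspace :: "'v set \<Rightarrow> ('v \<Rightarrow> 'v \<Rightarrow> complex) \<Rightarrow> complex \<Rightarrow> ('v \<Rightarrow> complex) \<Rightarrow> bool" where
  "in_eigenspace V M \<mu> g \<longleftrightarrow> (\<forall>x\<in>V. mat_apply V M g x = \<mu> * g x)"

definition has_eigenvalue :: "'v set \<Rightarrow> ('v \<Rightarrow> 'v \<Rightarrow> complex) \<Rightarrow> complex \<Rightarrow> bool" where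
  "has_eigenvalue V M \<mu> \<longleftrightarrow> (\<exists>g. in_eigenspace V M \<mu> g \<and> (\<exists>x\<in>V. g x \<noteq> 0))"

lemma in_eigenspace_scale: "in_eigenspace V M \<mu> g \<Longrightarrow> in_eigenspace V M \<mu> (\<lambda>x. c * g x)"
  by (simp add: in_eigenspace_def mat_apply_scale)

lemma in_eigenspace_cong:
  "in_eigenspace V M \<mu> g \<Longrightarrow> (\<And>x. x \<in> V \<Longrightarrow> g x = g' x) \<Longrightarrow> in_eigenspace V M \<mu> g'"
  unfolding in_eigenspace_def by (metis mat_apply_cong)

subsection \<open>Spectral decomposition of Hermitian matrices\<close>

definition poly_apply :: "'v set \<Rightarrow> ('v \<Rightarrow> 'v \<Rightarrow> complex) \<Rightarrow> complex poly \<Rightarrow> ('v \<Rightarrow> complex) \<Rightarrow> 'v \<Rightarrow> complex" where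
  "poly_apply V M p f = fold_coeffs (\<lambda>a g x. a * f x + mat_apply V M g x) p (\<lambda>x. 0)"

lemma poly_apply_0 [simp]: "poly_apply V M 0 f = (\<lambda>x. 0)"
  by (simp add: poly_apply_def)

lemma poly_apply_pCons:
  "poly_apply V M (pCons a p) f = (\<lambda>x. a * f x + mat_apply V M (poly_apply V M p f) x)"
  by (cases "a = 0 \<and> p = 0") (auto simp: poly_apply_def mat_apply_def)

lemma poly_apply_add: "poly_apply V M (p + q) f = (\<lambda>x. poly_apply V M p f x + poly_apply V M q f x)"
  by (induction p q rule: poly_induct2) (simp_all add: poly_apply_pCons mat_apply_add algebra_simps)

lemma poly_apply_smult: "poly_apply V M (smult c p) f = (\<lambda>x. c * poly_apply V M p f x)"
  by (induction p) (simp_all add: poly_apply_pCons mat_apply_scale algebra_simps)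

lemma poly_apply_mult: "poly_apply V M (p * q) f = poly_apply V M p (poly_apply V M q f)"
  by (induction p) (simp_all add: poly_apply_pCons poly_apply_add poly_apply_smult)

lemma poly_apply_linear: "poly_apply V M [:-z, 1:] g = (\<lambda>x. mat_apply V M g x - z * g x)"
  by (simp add: poly_apply_pCons)

lemma poly_apply_vec_scale: "poly_apply V M p (\<lambda>x. c * f x) = (\<lambda>x. c * poly_apply V M p f x)"
  by (induction p) (simp_all add: poly_apply_pCons mat_apply_add mat_apply_scale algebra_simps)

lemma poly_apply_vec_diff:
  "poly_apply V M p (\<lambda>x. f x - g x) = (\<lambda>x. poly_apply V M p f x - poly_apply V M p g x)"
  by (induction p) (simp_all add: poly_apply_pCons mat_apply_diff algebra_simps)

lemma poly_apply_monom: "poly_apply V M (monom a k) f = (\<lambda>x. a * (mat_apply V M ^^ k) f x)"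
  by (induction k) (simp_all add: monom_Suc poly_apply_pCons mat_apply_scale monom_0)

lemma poly_apply_sum: "poly_apply V M (\<Sum>k\<in>K. p k) f = (\<lambda>x. \<Sum>k\<in>K. poly_apply V M (p k) f x)"
  by (induction K rule: infinite_finite_induct) (simp_all add: poly_apply_add)

lemma poly_apply_in_eigenspace:
  assumes "in_eigenspace V M z g" "x \<in> V"
  shows "poly_apply V M p g x = poly p z * g x"
  using assms(2)
proof (induction p arbitrary: x)
  case (pCons a p)
  have "mat_apply V M (poly_apply V M p g) = mat_apply V M (\<lambda>y. poly p z * g y)"
    by (rule mat_apply_cong) (use pCons.IH in auto)
  also have "\<dots> = (\<lambda>y. poly p z * mat_apply V M g y)"
    by (rule mat_apply_scale)
  finally show ?case
    using assms(1) pCons.prems by (simp add: poly_apply_pCons in_eigenspace_def algebra_simps)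
qed simp

definition cinner :: "'v set \<Rightarrow> ('v \<Rightarrow> complex) \<Rightarrow> ('v \<Rightarrow> complex) \<Rightarrow> complex" where
  "cinner V f g = (\<Sum>x\<in>V. cnj (f x) * g x)"

definition hermitian_on :: "'v set \<Rightarrow> ('v \<Rightarrow> 'v \<Rightarrow> complex) \<Rightarrow> bool" where
  "hermitian_on V M \<longleftrightarrow> (\<forall>x\<in>V. \<forall>y\<in>V. cnj (M x y) = M y x)"

lemma cinner_mat_apply_hermitian:
  assumes "hermitian_on V M"
  shows "cinner V (mat_apply V M f) g = cinner V f (mat_apply V M g)"
proof -
  have "cinner V (mat_apply V M f) g = (\<Sum>x\<in>V. \<Sum>y\<in>V. cnj (M x y) * cnj (f y) * g x)"
    by (simp add: cinner_def mat_apply_def sum_distrib_right)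
  also have "\<dots> = (\<Sum>y\<in>V. \<Sum>x\<in>V. cnj (M x y) * cnj (f y) * g x)"
    by (rule sum.swap)
  also have "\<dots> = (\<Sum>y\<in>V. \<Sum>x\<in>V. cnj (f y) * (M y x * g x))"
    using assms unfolding hermitian_on_def by (intro sum.cong refl) (simp add: algebra_simps)
  also have "\<dots> = cinner V f (mat_apply V M g)"
    by (simp add: cinner_def mat_apply_def sum_distrib_left)
  finally show ?thesis .
qed

lemma cinner_self_eq_0_iff:
  assumes "finite V"
  shows "cinner V f f = 0 \<longleftrightarrow> (\<forall>x\<in>V. f x = 0)"
proof -
  have "cinner V f f = of_real (\<Sum>x\<in>V. (cmod (f x))\<^sup>2)"
    unfolding cinner_def of_real_sum
    by (intro sum.cong refl) (metis complex_norm_square mult.commute of_real_power)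
  moreover have "(\<Sum>x\<in>V. (cmod (f x))\<^sup>2) = 0 \<longleftrightarrow> (\<forall>x\<in>V. f x = 0)"
    using assms by (simp add: sum_nonneg_eq_0_iff)
  ultimately show ?thesis
    by (metis of_real_eq_0_iff)
qed

lemma hermitian_eigenvalue_real:
  assumes "finite V" "hermitian_on V M" "has_eigenvalue V M z"
  shows "cnj z = z"
proof -
  obtain g where g: "in_eigenspace V M z g" and nonzero: "cinner V g g \<noteq> 0"
    using assms(3) cinner_self_eq_0_iff[OF assms(1)] unfolding has_eigenvalue_def by blast
  have "cnj z * cinner V g g = cinner V (mat_apply V M g) g"
    using g by (simp add: cinner_def in_eigenspace_def sum_distrib_left mult.assoc)
  also have "\<dots> = cinner V g (mat_apply V M g)"
    by (rule cinner_mat_apply_hermitian[OF assms(2)])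
  also have "\<dots> = z * cinner V g g"
    using g by (simp add: cinner_def in_eigenspace_def sum_distrib_left algebra_simps)
  finally show ?thesis
    using nonzero by simp
qed

text \<open>With \<open>k = (M - z) g\<close>, self-adjointness and \<open>cnj z = z\<close> give
  \<open>\<langle>k, k\<rangle> = \<langle>(M - z) k, g\<rangle> = 0\<close>.\<close>

lemma hermitian_square_kernel_subset_kernel:
  assumes "finite V" "hermitian_on V M" "cnj z = z"
    and "\<forall>x\<in>V. poly_apply V M ([:-z, 1:] * [:-z, 1:]) g x = 0"
  shows "\<forall>x\<in>V. poly_apply V M [:-z, 1:] g x = 0"
proof -
  define k where "k = poly_apply V M [:-z, 1:] g"
  have k: "k x = mat_apply V M g x - z * g x" for x
    by (simp add: k_def poly_apply_linear)
  have "cinner V k k = (\<Sum>x\<in>V. cnj (k x) * mat_apply V M g x - z * (cnj (k x) * g x))"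
    unfolding cinner_def by (rule sum.cong[OF refl]) (metis k right_diff_distrib mult.left_commute)
  also have "\<dots> = cinner V k (mat_apply V M g) - z * cinner V k g"
    by (simp add: cinner_def sum_subtractf sum_distrib_left)
  also have "\<dots> = cinner V (mat_apply V M k) g - z * cinner V k g"
    by (simp add: cinner_mat_apply_hermitian[OF assms(2)])
  also have "\<dots> = cinner V (poly_apply V M [:-z, 1:] k) g"
    using assms(3) by (simp add: poly_apply_linear cinner_def algebra_simps sum_subtractf sum_distrib_left)
  also have "poly_apply V M [:-z, 1:] k = poly_apply V M ([:-z, 1:] * [:-z, 1:]) g"
    by (simp only: k_def poly_apply_mult)
  also have "cinner V \<dots> g = 0"
    using assms(4) by (simp add: cinner_def)
  finally show ?thesis
    using cinner_self_eq_0_iff[OF assms(1)] k_def by blast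
qed

lemma sum_fun_apply: "(\<Sum>a\<in>A. f a) x = (\<Sum>a\<in>A. f a x)"
  by (induction A rule: infinite_finite_induct) simp_all

lemma supported_functions_dependent:
  fixes S :: "('v \<Rightarrow> complex) set"
  assumes "finite V" "\<forall>s\<in>S. \<forall>x. x \<notin> V \<longrightarrow> s x = 0" "card V < card S"
  shows "\<exists>t u. finite t \<and> t \<subseteq> S \<and> (\<forall>x. (\<Sum>s\<in>t. u s * s x) = 0) \<and> (\<exists>s\<in>t. u s \<noteq> 0)"
proof -
  interpret vs: vector_space "\<lambda>(c::complex) (f::'v \<Rightarrow> complex) x. c * f x"
    by unfold_locales (simp_all add: plus_fun_def distrib_left distrib_right mult.assoc)
  define T where "T = (\<lambda>v. (\<lambda>x. if x = v then 1 else 0 :: complex)) ` V"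
  have span: "S \<subseteq> vs.span T"
  proof
    fix s assume s: "s \<in> S"
    have "s = (\<Sum>v\<in>V. (\<lambda>x. s v * (if x = v then 1 else 0)))"
      using assms(1,2) s by (intro ext) (auto simp: sum_fun_apply if_distrib cong: if_cong)
    also have "\<dots> \<in> vs.span T"
      by (intro vs.span_sum vs.span_scale vs.span_base) (auto simp: T_def)
    finally show "s \<in> vs.span T" .
  qed
  have "card T \<le> card V"
    unfolding T_def by (rule card_image_le[OF assms(1)])
  then have "\<not> vs.independent S"
    using vs.independent_span_bound[OF _ _ span] assms(1,3) T_def by auto
  then obtain t u where t: "finite t" "t \<subseteq> S" "\<exists>s\<in>t. u s \<noteq> 0"
    and combination: "(\<Sum>s\<in>t. (\<lambda>x. u s * s x)) = 0"
    unfolding vs.dependent_explicit by blast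
  have "(\<Sum>s\<in>t. u s * s x) = 0" for x
    using fun_cong[OF combination, of x] by (simp add: sum_fun_apply)
  with t show ?thesis
    by blast
qed

lemma functions_on_finite_set_dependent:
  fixes r :: "nat \<Rightarrow> 'v \<Rightarrow> complex"
  assumes "finite V"
  shows "\<exists>c. (\<exists>k\<le>card V. c k \<noteq> 0) \<and> (\<forall>x\<in>V. (\<Sum>k\<le>card V. c k * r k x) = 0)"
proof -
  define n where "n = card V"
  define rV where "rV k = (\<lambda>x. if x \<in> V then r k x else 0)" for k
  show ?thesis
  proof (cases "inj_on rV {..n}")
    case False
    then obtain i j where ij: "i \<le> n" "j \<le> n" "i \<noteq> j" "rV i = rV j"
      unfolding inj_on_def by auto
    define c where "c k = (if k = i then 1 else if k = j then -1 else 0 :: complex)" for k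
    have "(\<Sum>k\<le>n. c k * r k x) = (\<Sum>k\<le>n. (if k = i then r k x else 0) - (if k = j then r k x else 0))" for x
      using ij(3) by (intro sum.cong) (auto simp: c_def)
    also have "\<dots> x = r i x - r j x" for x
      using ij(1,2) by (simp add: sum_subtractf)
    moreover have "r i x = r j x" if "x \<in> V" for x
      using ij(4) that unfolding rV_def by meson
    ultimately show ?thesis
      using ij(1) unfolding n_def by (intro exI[of _ c] conjI) (auto simp: c_def intro!: exI[of _ i])
  next
    case True
    then have "card V < card (rV ` {..n})"
      by (simp add: card_image n_def)
    then obtain t u where tu: "t \<subseteq> rV ` {..n}" "\<forall>x. (\<Sum>s\<in>t. u s * s x) = 0" "\<exists>s\<in>t. u s \<noteq> 0"
      using supported_functions_dependent[OF assms, of "rV ` {..n}"] by (auto simp: rV_def)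
    define c where "c k = (if rV k \<in> t then u (rV k) else 0)" for k
    have "(\<Sum>k\<le>n. c k * r k x) = 0" if x: "x \<in> V" for x
    proof -
      define K where "K = {k\<in>{..n}. rV k \<in> t}"
      have "(\<Sum>k\<le>n. c k * r k x) = (\<Sum>k\<in>K. u (rV k) * rV k x)"
        using x by (intro sum.mono_neutral_cong_right) (auto simp: K_def c_def rV_def)
      also have "\<dots> = (\<Sum>s\<in>rV ` K. u s * s x)"
        using True by (intro sum.reindex[symmetric, unfolded comp_def]) (auto simp: K_def inj_on_def)
      also have "rV ` K = t"
        using tu(1) unfolding K_def by auto
      finally show ?thesis
        using tu(2) by simp
    qed
    moreover obtain k where "k \<le> n" "c k \<noteq> 0"
      using tu(1,3) by (auto simp: c_def)
    ultimately show ?thesis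
      unfolding n_def by blast
  qed
qed

lemma annihilating_poly_exists:
  assumes "finite V"
  shows "\<exists>p. p \<noteq> 0 \<and> (\<forall>x\<in>V. poly_apply V M p f x = 0)"
proof -
  obtain c where c: "\<exists>k\<le>card V. c k \<noteq> 0"
    and dep: "\<forall>x\<in>V. (\<Sum>k\<le>card V. c k * (mat_apply V M ^^ k) f x) = 0"
    using functions_on_finite_set_dependent[OF assms, of "\<lambda>k. (mat_apply V M ^^ k) f"] by blast
  define p where "p = (\<Sum>k\<le>card V. monom (c k) k)"
  have "coeff p k = c k" if "k \<le> card V" for k
    using that by (simp add: p_def coeff_sum coeff_monom)
  then have "p \<noteq> 0"
    using c by force
  moreover have "poly_apply V M p f = (\<lambda>x. \<Sum>k\<le>card V. c k * (mat_apply V M ^^ k) f x)"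
    by (simp add: p_def poly_apply_sum poly_apply_monom)
  ultimately show ?thesis
    using dep by auto
qed

inductive eigen_sum :: "'v set \<Rightarrow> ('v \<Rightarrow> 'v \<Rightarrow> complex) \<Rightarrow> (complex \<Rightarrow> bool) \<Rightarrow> ('v \<Rightarrow> complex) \<Rightarrow> bool"
  for V M P where
  zero: "(\<forall>x\<in>V. f x = 0) \<Longrightarrow> eigen_sum V M P f"
| add: "eigen_sum V M P f \<Longrightarrow> P \<mu> \<Longrightarrow> in_eigenspace V M \<mu> g \<Longrightarrow> eigen_sum V M P (\<lambda>x. f x + g x)"

lemma eigen_sum_cong:
  assumes "eigen_sum V M P f" "\<And>x. x \<in> V \<Longrightarrow> f x = f' x"
  shows "eigen_sum V M P f'"
  using assms
proof (induction arbitrary: f' rule: eigen_sum.induct)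
  case (zero f)
  then show ?case by (simp add: eigen_sum.zero)
next
  case (add f \<mu> g)
  have "in_eigenspace V M \<mu> (\<lambda>x. f' x - f x)"
    by (rule in_eigenspace_cong[OF add.hyps(3)]) (metis add.prems add_diff_cancel_left')
  then have "eigen_sum V M P (\<lambda>x. f x + (f' x - f x))"
    by (intro eigen_sum.add[OF add.hyps(1) add.hyps(2)])
  then show ?case by simp
qed

lemma eigen_sum_add:
  assumes "eigen_sum V M P f2" "eigen_sum V M P f1"
  shows "eigen_sum V M P (\<lambda>x. f1 x + f2 x)"
  using assms
proof (induction rule: eigen_sum.induct)
  case (zero f)
  show ?case by (rule eigen_sum_cong[OF zero.prems]) (simp add: zero.hyps)
next
  case (add f \<mu> g)
  have "eigen_sum V M P (\<lambda>x. (f1 x + f x) + g x)"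
    by (rule eigen_sum.add[OF add.IH[OF add.prems] add.hyps(2,3)])
  then show ?case by (simp add: add.assoc)
qed

lemma eigen_sum_mono: "eigen_sum V M P f \<Longrightarrow> (\<And>\<mu>. P \<mu> \<Longrightarrow> Q \<mu>) \<Longrightarrow> eigen_sum V M Q f"
  by (induction rule: eigen_sum.induct) (auto intro: eigen_sum.intros)

lemma in_eigenspace_cofactor:
  "\<forall>x\<in>V. poly_apply V M ([:-z, 1:] * q) f x = 0 \<Longrightarrow> in_eigenspace V M z (poly_apply V M q f)"
  by (simp only: in_eigenspace_def poly_apply_mult poly_apply_linear) simp

lemma hermitian_cofactor_nonzero:
  assumes "finite V" "hermitian_on V M"
    and annihilated: "\<forall>x\<in>V. poly_apply V M ([:-z, 1:] * q) f x = 0"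
    and nonzero: "\<exists>x\<in>V. poly_apply V M q f x \<noteq> 0"
  shows "poly q z \<noteq> 0"
proof
  assume "poly q z = 0"
  then obtain r where q: "q = [:-z, 1:] * r"
    by (auto simp: poly_eq_0_iff_dvd dvd_def)
  have "has_eigenvalue V M z"
    using in_eigenspace_cofactor[OF annihilated] nonzero unfolding has_eigenvalue_def by blast
  then have "cnj z = z"
    by (rule hermitian_eigenvalue_real[OF assms(1,2)])
  moreover have "\<forall>x\<in>V. poly_apply V M ([:-z, 1:] * [:-z, 1:]) (poly_apply V M r f) x = 0"
    using annihilated unfolding q by (simp only: poly_apply_mult mult.assoc)
  ultimately have "\<forall>x\<in>V. poly_apply V M [:-z, 1:] (poly_apply V M r f) x = 0"
    by (rule hermitian_square_kernel_subset_kernel[OF assms(1,2)])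
  then show False
    using nonzero unfolding q by (simp only: poly_apply_mult) blast
qed

lemma poly_apply_remove_eigencomponent:
  assumes "in_eigenspace V M z (poly_apply V M q f)" "poly q z \<noteq> 0"
  shows "\<forall>x\<in>V. poly_apply V M q (\<lambda>x. f x - inverse (poly q z) * poly_apply V M q f x) x = 0"
  using assms poly_apply_in_eigenspace[OF assms(1)] by (simp add: poly_apply_vec_diff poly_apply_vec_scale)

lemma eigen_sum_if_annihilated:
  assumes "finite V" "hermitian_on V M"
  shows "p \<noteq> 0 \<Longrightarrow> \<forall>x\<in>V. poly_apply V M p f x = 0 \<Longrightarrow> eigen_sum V M (has_eigenvalue V M) f"
proof (induction "degree p" arbitrary: p f rule: less_induct)
  case less
  show ?case
  proof (cases "degree p = 0")
    case True
    then obtain c where "p = [:c:]" "c \<noteq> 0"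
      using less.prems(1) by (metis degree_eq_zeroE pCons_0_0)
    then show ?thesis
      using less.prems(2) by (intro eigen_sum.zero) (simp add: poly_apply_pCons)
  next
    case False
    txt \<open>Split off a root \<open>z\<close> of \<open>p = [:-z, 1:] * q\<close>: \<open>g = q(M) f\<close> lies in the \<open>z\<close>-eigenspace,
      and if \<open>g \<noteq> 0\<close> then \<open>q(z) \<noteq> 0\<close> and \<open>q\<close> annihilates \<open>f - g / q(z)\<close>.\<close>
    then obtain z where "poly p z = 0"
      using alg_closed_imp_poly_has_root by blast
    then obtain q where p: "p = [:-z, 1:] * q"
      by (auto simp: poly_eq_0_iff_dvd dvd_def)
    with less.prems(1) have "q \<noteq> 0" by auto
    then have deg: "degree q < degree p"
      unfolding p by (subst degree_mult_eq) auto
    define g where "g = poly_apply V M q f"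
    have eig: "in_eigenspace V M z g"
      unfolding g_def by (rule in_eigenspace_cofactor) (use less.prems(2) p in simp)
    show ?thesis
    proof (cases "\<forall>x\<in>V. g x = 0")
      case True
      then show ?thesis
        using less.hyps[OF deg \<open>q \<noteq> 0\<close>] g_def by blast
    next
      case False
      have c: "poly q z \<noteq> 0"
        using hermitian_cofactor_nonzero[OF assms] less.prems(2) False p g_def by blast
      define h where "h = (\<lambda>x. f x - inverse (poly q z) * g x)"
      have "\<forall>x\<in>V. poly_apply V M q h x = 0"
        using poly_apply_remove_eigencomponent[OF eig[unfolded g_def] c] by (simp add: h_def g_def)
      then have "eigen_sum V M (has_eigenvalue V M) h"
        using less.hyps[OF deg \<open>q \<noteq> 0\<close>] by blast
      moreover have "has_eigenvalue V M z"
        using eig False unfolding has_eigenvalue_def by blast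
      ultimately have "eigen_sum V M (has_eigenvalue V M) (\<lambda>x. h x + inverse (poly q z) * g x)"
        using eig by (intro eigen_sum.add in_eigenspace_scale)
      then show ?thesis
        by (simp add: h_def)
    qed
  qed
qed

theorem hermitian_eigen_sum:
  assumes "finite V" "hermitian_on V M"
  shows "eigen_sum V M (has_eigenvalue V M) f"
  using annihilating_poly_exists[OF assms(1)] eigen_sum_if_annihilated[OF assms] by blast

subsection \<open>Adjacency matrices of graphs and of their direct products\<close>

abbreviation cadj :: "'a graph \<Rightarrow> 'a \<Rightarrow> 'a \<Rightarrow> complex" where
  "cadj G \<equiv> \<lambda>u v. complex_of_real (adj G u v)"

lemma hermitian_cadj: "simple_graph G \<Longrightarrow> hermitian_on (fst G) (cadj G)"
  by (auto simp: simple_graph_def hermitian_on_def adj_def)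

lemma adj_eigenvalue_if_has_eigenvalue:
  assumes "has_eigenvalue (fst G) (cadj G) (of_real lam)"
  shows "adj_eigenvalue G lam"
proof -
  obtain g v where g: "in_eigenspace (fst G) (cadj G) (of_real lam) g" and v: "v \<in> fst G" "g v \<noteq> 0"
    using assms unfolding has_eigenvalue_def by blast
  have re: "(\<Sum>y\<in>fst G. adj G u y * Re (g y)) = lam * Re (g u)" if "u \<in> fst G" for u
  proof -
    have "(\<Sum>y\<in>fst G. adj G u y * Re (g y)) = Re (mat_apply (fst G) (cadj G) g u)"
      by (simp add: mat_apply_def Re_sum)
    then show ?thesis
      using g that by (simp add: in_eigenspace_def)
  qed
  have im: "(\<Sum>y\<in>fst G. adj G u y * Im (g y)) = lam * Im (g u)" if "u \<in> fst G" for u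
  proof -
    have "(\<Sum>y\<in>fst G. adj G u y * Im (g y)) = Im (mat_apply (fst G) (cadj G) g u)"
      by (simp add: mat_apply_def Im_sum)
    then show ?thesis
      using g that by (simp add: in_eigenspace_def)
  qed
  consider "Re (g v) \<noteq> 0" | "Im (g v) \<noteq> 0"
    using v(2) complex_eq_iff by force
  then show ?thesis
  proof cases
    case 1
    then show ?thesis
      unfolding adj_eigenvalue_def using re v(1) by (intro exI[of _ "\<lambda>y. Re (g y)"]) auto
  next
    case 2
    then show ?thesis
      unfolding adj_eigenvalue_def using im v(1) by (intro exI[of _ "\<lambda>y. Im (g y)"]) auto
  qed
qed

lemma degree_eq_sum_adj: "finite (fst G) \<Longrightarrow> real (Defs.degree G u) = (\<Sum>v\<in>fst G. adj G u v)"
  by (simp add: Defs.degree_def adj_def flip: sum.inter_filter)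

lemma adj_eigenvalue_regular:
  assumes "finite (fst G)" "regular G k" "fst G \<noteq> {}"
  shows "adj_eigenvalue G (real k)"
  unfolding adj_eigenvalue_def
proof (intro exI[of _ "\<lambda>_. 1"] conjI)
  show "\<exists>v\<in>fst G. (1::real) \<noteq> 0"
    using assms(3) by auto
  show "\<forall>u\<in>fst G. (\<Sum>v\<in>fst G. adj G u v * 1) = real k * 1"
    using assms(2) by (simp add: regular_def flip: degree_eq_sum_adj[OF assms(1)])
qed

lemma nu2_enatE:
  assumes "nu2 n = enat c"
  obtains q where "odd q" "n = 2 ^ c * q"
proof -
  have "n \<noteq> 0" "multiplicity 2 n = c"
    using assms by (auto simp: nu2_def split: if_splits)
  then show ?thesis
    using multiplicity_decompose'[of n 2] that by auto
qed

definition odd_times_pow2 :: "nat \<Rightarrow> complex \<Rightarrow> bool" where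
  "odd_times_pow2 c \<mu> \<longleftrightarrow> (\<exists>q::int. odd q \<and> \<mu> = 2 ^ c * of_int q)"

lemma odd_times_pow2_mult: "odd_times_pow2 c a \<Longrightarrow> odd_times_pow2 d b \<Longrightarrow> odd_times_pow2 (c + d) (a * b)"
  unfolding odd_times_pow2_def
proof (elim exE conjE)
  fix q r :: int
  assume "odd q" "a = 2 ^ c * of_int q" "odd r" "b = 2 ^ d * of_int r"
  then show "\<exists>q::int. odd q \<and> a * b = 2 ^ (c + d) * of_int q"
    by (intro exI[of _ "q * r"]) (simp add: power_add algebra_simps)
qed

lemma eigen_sum_adj_odd_times_pow2:
  assumes "simple_graph G" "regular G k" "k \<ge> 1"
    and "\<forall>lam. adj_eigenvalue G lam \<longrightarrow> (\<exists>n::int. lam = of_int n \<and> nu2 n = c)"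
  shows "\<exists>C. \<forall>f. eigen_sum (fst G) (cadj G) (odd_times_pow2 C) f"
proof (cases "fst G = {}")
  case True
  then show ?thesis by (auto intro: eigen_sum.zero)
next
  case False
  have fin: "finite (fst G)"
    using assms(1) by (simp add: simple_graph_def)
  obtain n :: int where "real k = of_int n" "nu2 n = c"
    using assms(4) adj_eigenvalue_regular[OF fin assms(2) False] by blast
  then have "nu2 (int k) = c"
    by (metis of_int_eq_iff of_int_of_nat_eq)
  then have c: "c = enat (multiplicity 2 (int k))"
    using assms(3) by (simp add: nu2_def)
  have "odd_times_pow2 (multiplicity 2 (int k)) \<mu>" if "has_eigenvalue (fst G) (cadj G) \<mu>" for \<mu>
  proof -
    have \<mu>: "\<mu> = of_real (Re \<mu>)"
      using hermitian_eigenvalue_real[OF fin hermitian_cadj[OF assms(1)] that]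
      by (simp add: complex_eq_iff)
    then have "adj_eigenvalue G (Re \<mu>)"
      using that by (intro adj_eigenvalue_if_has_eigenvalue) simp
    then obtain m :: int where m: "Re \<mu> = of_int m" "nu2 m = enat (multiplicity 2 (int k))"
      using assms(4) c by blast
    obtain q where "odd q" "m = 2 ^ multiplicity 2 (int k) * q"
      using nu2_enatE[OF m(2)] .
    then show ?thesis
      unfolding odd_times_pow2_def using m(1) \<mu> by (intro exI[of _ q]) simp
  qed
  then show ?thesis
    using hermitian_eigen_sum[OF fin hermitian_cadj[OF assms(1)]] eigen_sum_mono by blast
qed

lemma dprod_Nil: "dprod [] = ({[]}, \<lambda>xs ys. xs = [] \<and> ys = [])"
  by (auto simp: dprod_def fun_eq_iff)

lemma vertices_dprod_Cons: "fst (dprod (G # Gs)) = (\<lambda>(x, xs). x # xs) ` (fst G \<times> fst (dprod Gs))"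
proof (intro set_eqI iffI)
  fix l assume l: "l \<in> fst (dprod (G # Gs))"
  then obtain x xs where x: "l = x # xs"
    by (cases l) (auto simp: dprod_def)
  then show "l \<in> (\<lambda>(x, xs). x # xs) ` (fst G \<times> fst (dprod Gs))"
    using l by (fastforce simp: dprod_def)
next
  fix l assume "l \<in> (\<lambda>(x, xs). x # xs) ` (fst G \<times> fst (dprod Gs))"
  then show "l \<in> fst (dprod (G # Gs))"
    by (auto simp: dprod_def less_Suc_eq_0_disj)
qed

lemma edges_dprod_Cons:
  "snd (dprod (G # Gs)) (x # xs) (y # ys) \<longleftrightarrow> snd G x y \<and> snd (dprod Gs) xs ys"
  by (auto simp: dprod_def less_Suc_eq_0_disj)

lemma adj_dprod_Cons: "adj (dprod (G # Gs)) (x # xs) (y # ys) = adj G x y * adj (dprod Gs) xs ys"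
  by (simp add: adj_def edges_dprod_Cons)

lemma sum_vertices_dprod_Cons:
  "(\<Sum>l\<in>fst (dprod (G # Gs)). F l) = (\<Sum>x\<in>fst G. \<Sum>xs\<in>fst (dprod Gs). F (x # xs))"
proof -
  have "(\<Sum>l\<in>fst (dprod (G # Gs)). F l) = (\<Sum>(x, xs)\<in>fst G \<times> fst (dprod Gs). F (x # xs))"
    unfolding vertices_dprod_Cons by (subst sum.reindex) (auto simp: inj_on_def case_prod_unfold)
  then show ?thesis
    by (simp add: sum.cartesian_product)
qed

lemma finite_dprod: "\<forall>G\<in>set Gs. finite (fst G) \<Longrightarrow> finite (fst (dprod Gs))"
  by (induction Gs) (auto simp: dprod_Nil vertices_dprod_Cons)

lemma degree_dprod_Cons:
  "Defs.degree (dprod (G # Gs)) (x # xs) = Defs.degree G x * Defs.degree (dprod Gs) xs"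
proof -
  have "{l \<in> fst (dprod (G # Gs)). snd (dprod (G # Gs)) (x # xs) l} =
      (\<lambda>(y, ys). y # ys) ` ({y \<in> fst G. snd G x y} \<times> {ys \<in> fst (dprod Gs). snd (dprod Gs) xs ys})"
    by (auto simp: vertices_dprod_Cons edges_dprod_Cons)
  moreover have "inj_on (\<lambda>(y, ys). y # ys) A" for A :: "('a \<times> 'a list) set"
    by (auto simp: inj_on_def)
  ultimately show ?thesis
    unfolding Defs.degree_def by (simp add: card_image card_cartesian_product)
qed

lemma regular_dprod: "\<forall>G\<in>set Gs. regular G (k G) \<Longrightarrow> regular (dprod Gs) (\<Prod>G\<leftarrow>Gs. k G)"
proof (induction Gs)
  case Nil
  then show ?case by (simp add: regular_def Defs.degree_def dprod_Nil)
next
  case (Cons G Gs)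
  then show ?case
    by (auto simp: regular_def vertices_dprod_Cons degree_dprod_Cons)
qed

definition tensor :: "('a \<Rightarrow> complex) \<Rightarrow> ('a list \<Rightarrow> complex) \<Rightarrow> 'a list \<Rightarrow> complex" where
  "tensor f h = (\<lambda>l. f (hd l) * h (tl l))"

lemma in_eigenspace_tensor:
  assumes "in_eigenspace (fst G) (cadj G) a g" "in_eigenspace (fst (dprod Gs)) (cadj (dprod Gs)) b h"
  shows "in_eigenspace (fst (dprod (G # Gs))) (cadj (dprod (G # Gs))) (a * b) (tensor g h)"
  unfolding in_eigenspace_def
proof
  fix l assume "l \<in> fst (dprod (G # Gs))"
  then obtain x xs where l: "l = x # xs" "x \<in> fst G" "xs \<in> fst (dprod Gs)"
    by (auto simp: vertices_dprod_Cons)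
  have "mat_apply (fst (dprod (G # Gs))) (cadj (dprod (G # Gs))) (tensor g h) (x # xs) =
      mat_apply (fst G) (cadj G) g x * mat_apply (fst (dprod Gs)) (cadj (dprod Gs)) h xs"
    by (simp add: mat_apply_def sum_vertices_dprod_Cons adj_dprod_Cons tensor_def sum_product
        algebra_simps)
  then show "mat_apply (fst (dprod (G # Gs))) (cadj (dprod (G # Gs))) (tensor g h) l = a * b * tensor g h l"
    using assms l by (simp add: in_eigenspace_def tensor_def)
qed

lemma eigen_sum_tensor_eigenvector:
  assumes "in_eigenspace (fst G) (cadj G) a g" "P a"
    and "eigen_sum (fst (dprod Gs)) (cadj (dprod Gs)) Q h"
  shows "eigen_sum (fst (dprod (G # Gs))) (cadj (dprod (G # Gs))) (\<lambda>\<mu>. \<exists>a b. P a \<and> Q b \<and> \<mu> = a * b)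
    (tensor g h)"
  using assms(3)
proof (induction rule: eigen_sum.induct)
  case (zero h)
  then show ?case
    by (intro eigen_sum.zero) (auto simp: vertices_dprod_Cons tensor_def)
next
  case (add h b k)
  have "tensor g (\<lambda>x. h x + k x) = (\<lambda>l. tensor g h l + tensor g k l)"
    by (simp add: tensor_def fun_eq_iff distrib_left)
  then show ?case
    using eigen_sum.add[OF add.IH _ in_eigenspace_tensor[OF assms(1) add.hyps(3)]] assms(2) add.hyps(2)
    by auto
qed

lemma eigen_sum_tensor:
  assumes "eigen_sum (fst G) (cadj G) P f" "eigen_sum (fst (dprod Gs)) (cadj (dprod Gs)) Q h"
  shows "eigen_sum (fst (dprod (G # Gs))) (cadj (dprod (G # Gs))) (\<lambda>\<mu>. \<exists>a b. P a \<and> Q b \<and> \<mu> = a * b)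
    (tensor f h)"
  using assms(1)
proof (induction rule: eigen_sum.induct)
  case (zero f)
  then show ?case
    by (intro eigen_sum.zero) (auto simp: vertices_dprod_Cons tensor_def)
next
  case (add f a g)
  have "tensor (\<lambda>x. f x + g x) h = (\<lambda>l. tensor f h l + tensor g h l)"
    by (simp add: tensor_def fun_eq_iff distrib_right)
  then show ?case
    using eigen_sum_add[OF eigen_sum_tensor_eigenvector[where P = P and Q = Q, OF add.hyps(3,2) assms(2)] add.IH] by simp
qed

lemma eigen_sum_dprod_indicator:
  assumes "\<forall>G\<in>set Gs. \<forall>w\<in>fst G. eigen_sum (fst G) (cadj G) (odd_times_pow2 (c G)) (\<lambda>x. if x = w then 1 else 0)"
    and "u \<in> fst (dprod Gs)"
  shows "eigen_sum (fst (dprod Gs)) (cadj (dprod Gs)) (odd_times_pow2 (\<Sum>G\<leftarrow>Gs. c G)) (\<lambda>x. if x = u then 1 else 0)"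
  using assms
proof (induction Gs arbitrary: u)
  case Nil
  have "in_eigenspace (fst (dprod [])) (cadj (dprod [])) 1 (\<lambda>x. if x = u then 1 else 0)"
    using Nil.prems(2) by (simp add: in_eigenspace_def mat_apply_def dprod_Nil adj_def)
  moreover have "odd_times_pow2 0 1"
    unfolding odd_times_pow2_def by (intro exI[of _ 1]) simp
  ultimately have "eigen_sum (fst (dprod [])) (cadj (dprod [])) (odd_times_pow2 0) (\<lambda>x. 0 + (if x = u then 1 else 0))"
    by (intro eigen_sum.add eigen_sum.zero) auto
  then show ?case by simp
next
  case (Cons G Gs)
  obtain x xs where u: "u = x # xs" "x \<in> fst G" "xs \<in> fst (dprod Gs)"
    using Cons.prems(2) by (auto simp: vertices_dprod_Cons)
  have "eigen_sum (fst (dprod (G # Gs))) (cadj (dprod (G # Gs))) (odd_times_pow2 (c G + (\<Sum>G\<leftarrow>Gs. c G)))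
      (tensor (\<lambda>y. if y = x then 1 else 0) (\<lambda>ys. if ys = xs then 1 else 0))"
  proof (rule eigen_sum_mono)
    show "eigen_sum (fst (dprod (G # Gs))) (cadj (dprod (G # Gs)))
        (\<lambda>\<mu>. \<exists>a b. odd_times_pow2 (c G) a \<and> odd_times_pow2 (\<Sum>G\<leftarrow>Gs. c G) b \<and> \<mu> = a * b)
        (tensor (\<lambda>y. if y = x then 1 else 0) (\<lambda>ys. if ys = xs then 1 else 0))"
      using Cons u by (intro eigen_sum_tensor) auto
  qed (auto intro: odd_times_pow2_mult)
  then show ?case
    by (simp, rule eigen_sum_cong) (auto simp: vertices_dprod_Cons tensor_def u(1))
qed

subsection \<open>Laplacian evolution on the blow-up\<close>

lemma mat_apply_mat_pow_0: "finite V \<Longrightarrow> v \<in> V \<Longrightarrow> mat_apply V (mat_pow V M 0) h v = h v"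
  by (simp add: mat_apply_def if_distrib[of "\<lambda>c. c * _"] cong: if_cong)

lemma mat_apply_mat_pow_Suc:
  "mat_apply V (mat_pow V M (Suc n)) h v = mat_apply V M (mat_apply V (mat_pow V M n) h) v"
proof -
  have "mat_apply V (mat_pow V M (Suc n)) h v = (\<Sum>w\<in>V. \<Sum>x\<in>V. M v x * mat_pow V M n x w * h w)"
    by (simp add: mat_apply_def sum_distrib_right)
  also have "\<dots> = (\<Sum>x\<in>V. \<Sum>w\<in>V. M v x * mat_pow V M n x w * h w)"
    by (rule sum.swap)
  also have "\<dots> = mat_apply V M (mat_apply V (mat_pow V M n) h) v"
    by (simp add: mat_apply_def sum_distrib_left mult.assoc)
  finally show ?thesis .
qed

lemma mat_apply_mat_pow_in_eigenspace:
  assumes "finite V" "in_eigenspace V M \<mu> h" "v \<in> V"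
  shows "mat_apply V (mat_pow V M n) h v = \<mu> ^ n * h v"
  using assms(3)
proof (induction n arbitrary: v)
  case 0
  then show ?case
    using mat_apply_mat_pow_0[OF assms(1)] by (simp del: mat_pow.simps)
next
  case (Suc n)
  have "mat_apply V (mat_pow V M (Suc n)) h v = mat_apply V M (\<lambda>x. \<mu> ^ n * h x) v"
    unfolding mat_apply_mat_pow_Suc by (simp add: Suc.IH cong: mat_apply_cong)
  also have "\<dots> = \<mu> ^ Suc n * h v"
    using assms(2) Suc.prems by (simp add: mat_apply_scale in_eigenspace_def)
  finally show ?case .
qed

text \<open>\<open>lap_U_maps G t h h'\<close> says \<open>U(t) h = h'\<close> on the vertex set, with \<open>U(t) h\<close> evaluated
  termwise along the series defining \<open>lap_U\<close>, so no series has to be exchanged with a finite sum.\<close>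

definition lap_U_maps :: "'a graph \<Rightarrow> real \<Rightarrow> ('a \<Rightarrow> complex) \<Rightarrow> ('a \<Rightarrow> complex) \<Rightarrow> bool" where
  "lap_U_maps G t h h' \<longleftrightarrow> (\<forall>v\<in>fst G.
     (\<lambda>n. (\<i> * of_real t) ^ n / of_nat (fact n) * mat_apply (fst G) (mat_pow (fst G) (laplacian G) n) h v)
       sums h' v)"

lemma lap_U_maps_cong:
  assumes "lap_U_maps G t h h'" "\<forall>v\<in>fst G. h v = g v" "\<forall>v\<in>fst G. h' v = g' v"
  shows "lap_U_maps G t g g'"
  using assms by (simp add: lap_U_maps_def cong: mat_apply_cong)

lemma lap_U_maps_zero: "\<forall>v\<in>fst G. h v = 0 \<Longrightarrow> lap_U_maps G t h (\<lambda>v. 0)"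
  by (simp add: lap_U_maps_def cong: mat_apply_cong)

lemma lap_U_maps_add:
  "lap_U_maps G t h1 h1' \<Longrightarrow> lap_U_maps G t h2 h2' \<Longrightarrow>
    lap_U_maps G t (\<lambda>v. h1 v + h2 v) (\<lambda>v. h1' v + h2' v)"
  unfolding lap_U_maps_def mat_apply_add by (simp add: distrib_left sums_add)

lemma lap_U_maps_in_eigenspace:
  assumes "finite (fst G)" "in_eigenspace (fst G) (laplacian G) \<mu> h"
  shows "lap_U_maps G t h (\<lambda>v. exp (\<i> * of_real t * \<mu>) * h v)"
  unfolding lap_U_maps_def
proof
  fix v assume v: "v \<in> fst G"
  have "(\<lambda>n. (\<i> * of_real t * \<mu>) ^ n /\<^sub>R fact n * h v) sums (exp (\<i> * of_real t * \<mu>) * h v)"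
    by (intro sums_mult2 exp_converges)
  then show "(\<lambda>n. (\<i> * of_real t) ^ n / of_nat (fact n) * mat_apply (fst G) (mat_pow (fst G) (laplacian G) n) h v)
      sums (exp (\<i> * of_real t * \<mu>) * h v)"
    by (simp add: mat_apply_mat_pow_in_eigenspace[OF assms v] scaleR_conv_of_real power_mult_distrib
        divide_inverse algebra_simps)
qed

lemma lap_pst_if_lap_U_maps_indicator:
  assumes "finite (fst G)" "a \<in> fst G" "b \<in> fst G" "\<tau> > 0"
    and "lap_U_maps G \<tau> (\<lambda>w. if w = a then 1 else 0) (\<lambda>w. if w = b then \<gamma> else 0)"
  shows "lap_pst G a b"
proof -
  have indicator: "mat_apply (fst G) (mat_pow (fst G) (laplacian G) n) (\<lambda>w. if w = a then 1 else 0) v =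
      mat_pow (fst G) (laplacian G) n v a" for n v
    using assms(1,2) by (simp add: mat_apply_def if_distrib cong: if_cong)
  have "lap_U G \<tau> v a = \<gamma> * (if v = b then 1 else 0)" if "v \<in> fst G" for v
    using bspec[OF assms(5)[unfolded lap_U_maps_def] that]
    unfolding lap_U_def indicator by (simp add: sums_iff)
  then show ?thesis
    unfolding lap_pst_def using assms(2-4) by blast
qed

lemma vertices_blowup2: "fst (blowup2 D) = {0, 1} \<times> fst D"
  by (simp add: blowup2_def)

lemma degree_blowup2: "l \<in> {0, 1} \<Longrightarrow> Defs.degree (blowup2 D) (l, x) = 2 * Defs.degree D x"
proof -
  assume "l \<in> {0, 1}"
  then have "{w \<in> fst (blowup2 D). snd (blowup2 D) (l, x) w} = {0, 1::nat} \<times> {y \<in> fst D. snd D x y}"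
    by (auto simp: blowup2_def)
  then show ?thesis
    by (simp add: Defs.degree_def card_cartesian_product)
qed

lemma mat_apply_laplacian_blowup2:
  assumes "finite (fst D)" "regular D K" "l \<in> {0, 1}" "x \<in> fst D"
  shows "mat_apply (fst (blowup2 D)) (laplacian (blowup2 D)) h (l, x) =
    of_nat (2 * K) * h (l, x) - mat_apply (fst D) (cadj D) (\<lambda>y. h (0, y) + h (1, y)) x"
proof -
  let ?W = "fst (blowup2 D)"
  have "Defs.degree (blowup2 D) (l, x) = 2 * K"
    using degree_blowup2[OF assms(3), of D x] assms(2,4) unfolding regular_def by simp
  then have "mat_apply ?W (laplacian (blowup2 D)) h (l, x) =
      (\<Sum>w\<in>?W. if (l, x) = w then of_nat (2 * K) * h w else 0) - (\<Sum>w\<in>?W. if snd D x (snd w) then h w else 0)"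
    unfolding mat_apply_def sum_subtractf[symmetric] using assms(3)
    by (intro sum.cong refl) (auto simp: laplacian_def blowup2_def algebra_simps)
  also have "(\<Sum>w\<in>?W. if (l, x) = w then of_nat (2 * K) * h w else 0) = of_nat (2 * K) * h (l, x)"
    using assms by (simp add: vertices_blowup2)
  also have "(\<Sum>w\<in>?W. if snd D x (snd w) then h w else 0) =
      (\<Sum>m\<in>{0::nat, 1}. \<Sum>y\<in>fst D. if snd D x y then h (m, y) else 0)"
    unfolding vertices_blowup2 sum.cartesian_product by (rule sum.cong) auto
  also have "\<dots> = mat_apply (fst D) (cadj D) (\<lambda>y. h (0, y) + h (1, y)) x"
    by (simp add: mat_apply_def adj_def sum.distrib[symmetric]) (rule sum.cong, auto)
  finally show ?thesis .
qed

lemma in_eigenspace_blowup2_even: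
  assumes "finite (fst D)" "regular D K" "in_eigenspace (fst D) (cadj D) \<mu> g"
  shows "in_eigenspace (fst (blowup2 D)) (laplacian (blowup2 D)) (of_nat (2 * K) - 2 * \<mu>) (\<lambda>(l, y). g y)"
  unfolding in_eigenspace_def
proof
  fix w assume "w \<in> fst (blowup2 D)"
  then obtain l x where w: "w = (l, x)" "l \<in> {0, 1}" "x \<in> fst D"
    by (auto simp: vertices_blowup2)
  have "mat_apply (fst D) (cadj D) (\<lambda>y. g y + g y) x = 2 * (\<mu> * g x)"
    using assms(3) w(3) by (simp add: mat_apply_scale in_eigenspace_def)
  then show "mat_apply (fst (blowup2 D)) (laplacian (blowup2 D)) (\<lambda>(l, y). g y) w =
      (of_nat (2 * K) - 2 * \<mu>) * (\<lambda>(l, y). g y) w"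
    using mat_apply_laplacian_blowup2[OF assms(1,2) w(2,3), of "\<lambda>(l, y). g y"] w(1)
    by (simp add: algebra_simps)
qed

lemma in_eigenspace_blowup2_odd:
  assumes "finite (fst D)" "regular D K"
  shows "in_eigenspace (fst (blowup2 D)) (laplacian (blowup2 D)) (of_nat (2 * K))
    (\<lambda>(l, y). (if l = 0 then 1 else - 1) * g y)"
  unfolding in_eigenspace_def
proof
  fix w assume "w \<in> fst (blowup2 D)"
  then obtain l x where w: "w = (l, x)" "l \<in> {0, 1}" "x \<in> fst D"
    by (auto simp: vertices_blowup2)
  then show "mat_apply (fst (blowup2 D)) (laplacian (blowup2 D)) (\<lambda>(l, y). (if l = 0 then 1 else - 1) * g y) w =
      of_nat (2 * K) * (\<lambda>(l, y). (if l = 0 then 1 else - 1) * g y) w"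
    using mat_apply_laplacian_blowup2[OF assms w(2,3)] by simp
qed

lemma exp_pi_odd:
  assumes "odd q"
  shows "exp (\<i> * of_real (pi * of_int q)) = -1"
proof -
  have "exp (\<i> * of_real (pi * of_int q)) = cis (pi * of_int q)"
    by (simp add: cis_conv_exp)
  also have "\<dots> = -1"
    using assms by (simp add: cis.ctr complex_eq_iff)
  finally show ?thesis .
qed

lemma exp_phase_odd_times_pow2:
  assumes "odd_times_pow2 C \<mu>" "\<tau> = pi / 2 ^ Suc C"
  shows "exp (\<i> * of_real \<tau> * (a - 2 * \<mu>)) = - exp (\<i> * of_real \<tau> * a)"
proof -
  obtain q :: int where q: "odd q" "\<mu> = 2 ^ C * of_int q"
    using assms(1) unfolding odd_times_pow2_def by blast
  have "\<i> * of_real \<tau> * (a - 2 * \<mu>) = \<i> * of_real \<tau> * a - \<i> * of_real (pi * of_int q)"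
    by (simp add: assms(2) q(2) field_simps)
  then have "exp (\<i> * of_real \<tau> * (a - 2 * \<mu>)) = exp (\<i> * of_real \<tau> * a) / exp (\<i> * of_real (pi * of_int q))"
    by (simp add: exp_diff)
  also have "\<dots> = - exp (\<i> * of_real \<tau> * a)"
    using exp_pi_odd[OF q(1)] by simp
  finally show ?thesis .
qed

lemma lap_U_maps_blowup2:
  assumes "finite (fst D)" "regular D K" "\<tau> = pi / 2 ^ Suc C"
    and "eigen_sum (fst D) (cadj D) (odd_times_pow2 C) f"
  shows "lap_U_maps (blowup2 D) \<tau> (\<lambda>(l, x). if l = 0 then f x else 0)
    (\<lambda>(l, x). if l = 1 then - exp (\<i> * of_real \<tau> * of_nat (2 * K)) * f x else 0)"
  using assms(4)
proof (induction rule: eigen_sum.induct)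
  case (zero f)
  have "lap_U_maps (blowup2 D) \<tau> (\<lambda>(l, x). if l = 0 then f x else 0) (\<lambda>v. 0)"
    using zero by (intro lap_U_maps_zero) (auto simp: vertices_blowup2)
  then show ?case
    by (rule lap_U_maps_cong) (use zero in \<open>auto simp: vertices_blowup2\<close>)
next
  case (add f \<mu> g)
  define E where "E = exp (\<i> * of_real \<tau> * of_nat (2 * K))"
  define S where "S = (\<lambda>(l::nat, y). 1 / 2 * g y)"
  define A where "A = (\<lambda>(l::nat, y). (if l = 0 then 1 else - 1) * (1 / 2 * g y))"
  have fin: "finite (fst (blowup2 D))"
    using assms(1) by (simp add: vertices_blowup2)
  have shift: "exp (\<i> * of_real \<tau> * (of_nat (2 * K) - 2 * \<mu>)) = - E"
    unfolding E_def by (rule exp_phase_odd_times_pow2[OF add.hyps(2) assms(3)])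
  have "lap_U_maps (blowup2 D) \<tau> S (\<lambda>v. exp (\<i> * of_real \<tau> * (of_nat (2 * K) - 2 * \<mu>)) * S v)"
    unfolding S_def
    by (intro lap_U_maps_in_eigenspace fin in_eigenspace_blowup2_even assms(1,2) in_eigenspace_scale add.hyps(3))
  then have "lap_U_maps (blowup2 D) \<tau> S (\<lambda>v. - E * S v)"
    by (simp only: shift)
  moreover have "lap_U_maps (blowup2 D) \<tau> A (\<lambda>v. E * A v)"
    unfolding A_def E_def by (intro lap_U_maps_in_eigenspace fin in_eigenspace_blowup2_odd assms(1,2))
  ultimately have "lap_U_maps (blowup2 D) \<tau> (\<lambda>v. ((\<lambda>(l, x). if l = 0 then f x else 0) v + S v) + A v)
      (\<lambda>v. ((\<lambda>(l, x). if l = 1 then - E * f x else 0) v + - E * S v) + E * A v)"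
    using add.IH unfolding E_def by (intro lap_U_maps_add)
  then show ?case
    by (rule lap_U_maps_cong) (auto simp: vertices_blowup2 S_def A_def E_def field_simps)
qed

lemma lap_pst_blowup2:
  assumes "finite (fst D)" "regular D K" "u \<in> fst D"
    and "eigen_sum (fst D) (cadj D) (odd_times_pow2 C) (\<lambda>x. if x = u then 1 else 0)"
  shows "lap_pst (blowup2 D) (0, u) (1, u)"
proof (rule lap_pst_if_lap_U_maps_indicator)
  show "lap_U_maps (blowup2 D) (pi / 2 ^ Suc C) (\<lambda>w. if w = (0, u) then 1 else 0)
      (\<lambda>w. if w = (1, u) then - exp (\<i> * of_real (pi / 2 ^ Suc C) * of_nat (2 * K)) else 0)"
    using lap_U_maps_blowup2[OF assms(1,2) refl assms(4)]
    by (rule lap_U_maps_cong) (auto simp: vertices_blowup2)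
qed (use assms in \<open>auto simp: vertices_blowup2\<close>)

theorem theorem6:
  fixes Gs :: "'a graph list"
  assumes "Gs \<noteq> []"
    and "\<forall>G \<in> set Gs. simple_graph G"
    and "\<forall>G \<in> set Gs. \<exists>k \<ge> 1. regular G k"
    and "\<forall>G \<in> set Gs. \<exists>c. \<forall>lam. adj_eigenvalue G lam \<longrightarrow> (\<exists>n :: int. lam = of_int n \<and> nu2 n = c)"
    and "u \<in> fst (dprod Gs)"
  shows "lap_pst (blowup2 (dprod Gs)) (0, u) (1, u)"
proof -
  have fin: "\<forall>G\<in>set Gs. finite (fst G)"
    using assms(2) by (simp add: simple_graph_def)
  obtain k where k: "\<forall>G\<in>set Gs. k G \<ge> 1 \<and> regular G (k G)"
    using bchoice[OF assms(3)] by blast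
  have "\<forall>G\<in>set Gs. \<exists>C. \<forall>f. eigen_sum (fst G) (cadj G) (odd_times_pow2 C) f"
    using assms(2,4) k eigen_sum_adj_odd_times_pow2 by metis
  then obtain c where c: "\<forall>G\<in>set Gs. \<forall>f. eigen_sum (fst G) (cadj G) (odd_times_pow2 (c G)) f"
    by (metis bchoice)
  have "eigen_sum (fst (dprod Gs)) (cadj (dprod Gs)) (odd_times_pow2 (\<Sum>G\<leftarrow>Gs. c G))
      (\<lambda>x. if x = u then 1 else 0)"
    using c assms(5) by (intro eigen_sum_dprod_indicator) auto
  moreover have "regular (dprod Gs) (\<Prod>G\<leftarrow>Gs. k G)"
    using k by (intro regular_dprod) auto
  ultimately show ?thesis
    by (intro lap_pst_blowup2[OF finite_dprod[OF fin] _ assms(5)])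
qed

end
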